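(* Assume that the distribution of $Z$ is aperiodic (the greatest common divisor of its support is $1$), that $\mathbb{E} Z=\infty$, and that $\mathbb{E}\min(Z,W)<\infty$. Then $\Lambda_n\to\infty$ almost surely as $n\to\infty$.
   Context: Let $Z,W,(Z_n)_{n\ge1},(W_n)_{n\ge1}$ be independent, identically distributed random variables taking values in $\mathbb{N}=\{1,2,3,\dots\}$. Define sets $T_n\subset\mathbb{Z}$ recursively by $T_n=\{n\}$ for $n\le 0$ and $T_n=\{n\}\cup T_{n-Z_n}\cup T_{n-W_n}$ for $n\ge1$. Let $\mathcal{L}_n=T_n\cap\{0,-1,-2,\dots\}$ and $\Lambda_n=|\mathcal{L}_n|$. *)

theory Defs
  imports "HOL-Probability.Probability"
begin

text \<open>The random tree sets T_n, for a fixed sample path: z k = Z_k, w k = W_k.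
  T_n = {n} for n <= 0, and T_n = {n} \<union> T_(n - Z_n) \<union> T_(n - W_n) for n >= 1.
  The values Z_k, W_k lie in {1,2,...}; the "max 1" only ensures termination of the
  recursion and is the identity on such values.\<close>

function Tset :: "(nat \<Rightarrow> nat) \<Rightarrow> (nat \<Rightarrow> nat) \<Rightarrow> int \<Rightarrow> int set" where
  "Tset z w n =
     (if n \<le> 0 then {n}
      else {n} \<union> Tset z w (n - int (max 1 (z (nat n))))
               \<union> Tset z w (n - int (max 1 (w (nat n)))))"
  by auto
termination
  by (relation "Wellfounded.measure (\<lambda>(z, w, n). nat n)") auto

declare Tset.simps [simp del]

definition Lambda :: "(nat \<Rightarrow> nat) \<Rightarrow> (nat \<Rightarrow> nat) \<Rightarrow> int \<Rightarrow> nat" where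
  "Lambda z w n = card (Tset z w n \<inter> {..0})"

end

theory Submission
  imports Defs
begin

text \<open>Call s good if Z_s >= s, so that s - Z_s is a leaf below 0, and s lies in every T_m
  with m >= s + N.  Aperiodicity makes every large integer a sum of values of Z, so fixing
  finitely many Z's just above s lets all of a window [s + N, s + N + r) descend to s; the
  tree from any larger m enters the window provided no t beyond it has both steps longer
  than t - (s + N), which by E min(Z, W) < oo fails with probability at most 1/2.  Hence
  P(s good) >= c P(Z >= s), while good events for s /= t are at most as correlated as
  {Z_s >= s} and {Z_t >= t}; since E Z = oo the series diverges and a Kochen--Stone bound
  with Kolmogorov's 0-1 law shows that almost surely infinitely many s are good.  By
  Borel--Cantelli each offset Z_s - s occurs only finitely often, so these s contribute
  infinitely many distinct leaves to the sets L_n.\<close>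

inductive_set monoid_closure :: "nat set \<Rightarrow> nat set" for S where
  zero: "0 \<in> monoid_closure S"
| add_base: "x \<in> monoid_closure S \<Longrightarrow> d \<in> S \<Longrightarrow> x + d \<in> monoid_closure S"

lemma monoid_closure_base: "d \<in> S \<Longrightarrow> d \<in> monoid_closure S"
  using monoid_closure.add_base[OF monoid_closure.zero] by simp

lemma monoid_closure_add:
  assumes "x \<in> monoid_closure S" "y \<in> monoid_closure S"
  shows "x + y \<in> monoid_closure S"
  using assms(2,1)
proof (induction y rule: monoid_closure.induct)
  case (add_base y d)
  then show ?case by (metis add.assoc monoid_closure.add_base)
qed simp

lemma monoid_closure_mult: "x \<in> monoid_closure S \<Longrightarrow> k * x \<in> monoid_closure S"
  by (induction k) (auto intro: monoid_closure_add monoid_closure.zero)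

lemma monoid_closure_last_summand:
  assumes "j \<in> monoid_closure S" "j > 0"
  shows "\<exists>d\<in>S. d \<le> j \<and> j - d \<in> monoid_closure S"
  using assms
proof (cases rule: monoid_closure.cases)
  case (add_base x d)
  then show ?thesis by (intro bexI[of _ d]) auto
qed simp

text \<open>The least positive difference d of two elements of the closure divides every element
  of S: otherwise the remainder of some y \<in> S modulo d would be a smaller such difference.\<close>
lemma monoid_closure_consecutive:
  assumes gcd: "Gcd S = 1" and "0 \<notin> S"
  obtains a where "a \<in> monoid_closure S" "a + 1 \<in> monoid_closure S"
proof -
  let ?D = "{d. d > 0 \<and> (\<exists>a\<in>monoid_closure S. a + d \<in> monoid_closure S)}"
  obtain x where x: "x \<in> S" using gcd by fastforce
  with \<open>0 \<notin> S\<close> have "x > 0" by (cases x) auto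
  with x have "x \<in> ?D"
    using monoid_closure.zero[of S] monoid_closure_base[OF x] by (auto intro!: bexI[of _ 0])
  define d where "d = Least (\<lambda>d. d \<in> ?D)"
  have "d \<in> ?D" unfolding d_def by (rule LeastI[of _ x]) fact
  then obtain a where a: "a \<in> monoid_closure S" "a + d \<in> monoid_closure S" and "d > 0"
    by auto
  have "d dvd y" if y: "y \<in> S" for y
  proof (rule ccontr)
    assume "\<not> d dvd y"
    define r where "r = y mod d"
    have r: "0 < r" "r < d" using \<open>\<not> d dvd y\<close> \<open>d > 0\<close> by (auto simp: r_def dvd_eq_mod_eq_0)
    define b where "b = (y div d + 1) * a + y"
    have b: "b \<in> monoid_closure S"
      unfolding b_def by (intro monoid_closure_add monoid_closure_mult a monoid_closure_base y)
    have "b + (d - r) = (y div d + 1) * a + (y div d * d + r) + (d - r)"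
      by (simp add: b_def r_def)
    also have "\<dots> = (y div d + 1) * (a + d)"
      using r by (simp add: algebra_simps)
    finally have "b + (d - r) \<in> monoid_closure S"
      using monoid_closure_mult[OF a(2)] by metis
    with b r have "d - r \<in> ?D" by auto
    then have "d \<le> d - r" unfolding d_def by (rule Least_le)
    with r show False by simp
  qed
  then have "d dvd Gcd S" by (intro Gcd_greatest) auto
  with gcd a show thesis using that by simp
qed

lemma monoid_closure_cofinite:
  assumes "Gcd S = 1" and "0 \<notin> S"
  obtains N where "\<And>n. n \<ge> N \<Longrightarrow> n \<in> monoid_closure S"
proof -
  obtain a where a: "a \<in> monoid_closure S" "a + 1 \<in> monoid_closure S"
    using monoid_closure_consecutive[OF assms] .
  have "n \<in> monoid_closure S" if n: "n \<ge> a * a" for n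
  proof (cases "a = 0")
    case True
    then show ?thesis using monoid_closure_mult[OF a(2), of n] by simp
  next
    case False
    define q r where "q = n div a" and "r = n mod a"
    have "r < a" using False by (simp add: r_def)
    moreover have "q \<ge> a"
      using n False unfolding q_def by (metis div_le_mono nonzero_mult_div_cancel_right)
    ultimately have "n = (q - r) * a + r * (a + 1)"
      using div_mult_mod_eq[of n a] by (simp add: q_def r_def algebra_simps diff_mult_distrib)
    also have "\<dots> \<in> monoid_closure S"
      by (intro monoid_closure_add monoid_closure_mult a)
    finally show ?thesis .
  qed
  then show thesis using that by blast
qed

lemma Tset_self: "n \<in> Tset z w n"
  by (subst Tset.simps) auto

lemma Tset_child_z: "n > 0 \<Longrightarrow> Tset z w (n - int (max 1 (z (nat n)))) \<subseteq> Tset z w n"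
  by (subst (2) Tset.simps) auto

lemma Tset_child_w: "n > 0 \<Longrightarrow> Tset z w (n - int (max 1 (w (nat n)))) \<subseteq> Tset z w n"
  by (subst (2) Tset.simps) auto

lemma finite_Tset: "finite (Tset z w n)"
  by (induction z w n rule: Tset.induct) (subst Tset.simps, auto)

lemma Tset_mono: "x \<in> Tset z w n \<Longrightarrow> Tset z w x \<subseteq> Tset z w n"
proof (induction z w n rule: Tset.induct)
  case (1 z w n)
  show ?case
  proof (cases "n \<le> 0")
    case True
    with "1.prems" show ?thesis by (subst (asm) Tset.simps) auto
  next
    case False
    with "1.prems" Tset.simps[of z w n] consider "x = n"
      | "x \<in> Tset z w (n - int (max 1 (z (nat n))))"
      | "x \<in> Tset z w (n - int (max 1 (w (nat n))))"
      by auto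
    then show ?thesis
      using "1.IH" False Tset_child_z[of n z w] Tset_child_w[of n z w] by cases auto
  qed
qed

lemma Tset_child_z_nat:
  assumes "1 \<le> z m" "z m \<le> m"
  shows "Tset z w (int m - int (z m)) \<subseteq> Tset z w (int m)"
  using Tset_child_z[of "int m" z w] assms by simp

lemma Tset_child_w_nat:
  assumes "1 \<le> w m" "w m \<le> m"
  shows "Tset z w (int m - int (w m)) \<subseteq> Tset z w (int m)"
  using Tset_child_w[of "int m" z w] assms by simp

lemma Tset_window:
  assumes step: "\<And>j. j \<in> C \<Longrightarrow> 0 < j \<Longrightarrow> j < L \<Longrightarrow>
                    1 \<le> z (s + j) \<and> z (s + j) \<le> j \<and> j - z (s + j) \<in> C"
    and "j \<in> C" "j < L"
  shows "int s \<in> Tset z w (int (s + j))"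
  using assms(2,3)
proof (induction j rule: less_induct)
  case (less j)
  show ?case
  proof (cases "j = 0")
    case True
    then show ?thesis by (simp add: Tset_self)
  next
    case False
    with step less.prems have z: "1 \<le> z (s + j)" "z (s + j) \<le> j" "j - z (s + j) \<in> C" by auto
    with less have "int s \<in> Tset z w (int (s + j) - int (z (s + j)))"
      using less.IH[of "j - z (s + j)"] by (simp add: of_nat_diff)
    with z show ?thesis using Tset_child_z_nat[of z "s + j" w] by auto
  qed
qed

lemma Tset_descent:
  assumes pos: "\<And>t. 1 \<le> z t" "\<And>t. 1 \<le> w t"
    and window: "\<And>m. a \<le> m \<Longrightarrow> m < b \<Longrightarrow> x \<in> Tset z w (int m)"
    and short: "\<And>t. b \<le> t \<Longrightarrow> min (z t) (w t) \<le> t - a"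
    and "a \<le> m"
  shows "x \<in> Tset z w (int m)"
  using \<open>a \<le> m\<close>
proof (induction m rule: less_induct)
  case (less m)
  show ?case
  proof (cases "m < b")
    case True
    with less.prems window show ?thesis by blast
  next
    case False
    then have "min (z m) (w m) \<le> m - a" by (intro short) simp
    then consider "z m \<le> m - a" | "w m \<le> m - a" by linarith
    then show ?thesis
    proof cases
      case 1
      with less pos(1)[of m] have "x \<in> Tset z w (int m - int (z m))"
        using less.IH[of "m - z m"] by (simp add: of_nat_diff)
      moreover have "z m \<le> m" using 1 by linarith
      ultimately show ?thesis using pos(1)[of m] Tset_child_z_nat[of z m w] by auto
    next
      case 2
      with less pos(2)[of m] have "x \<in> Tset z w (int m - int (w m))"
        using less.IH[of "m - w m"] by (simp add: of_nat_diff)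
      moreover have "w m \<le> m" using 2 by linarith
      ultimately show ?thesis using pos(2)[of m] Tset_child_w_nat[of w m z] by auto
    qed
  qed
qed

lemma card_leaves_le_Lambda:
  assumes "finite F"
    and "\<And>s. s \<in> F \<Longrightarrow> 1 \<le> s \<and> s \<le> z s \<and> int s \<in> Tset z w n"
  shows "card ((\<lambda>s. int s - int (z s)) ` F) \<le> Lambda z w n"
  unfolding Lambda_def
proof (rule card_mono)
  show "finite (Tset z w n \<inter> {..0})" by (simp add: finite_Tset)
  show "(\<lambda>s. int s - int (z s)) ` F \<subseteq> Tset z w n \<inter> {..0}"
  proof clarify
    fix s assume "s \<in> F"
    with assms(2) have s: "1 \<le> s" "s \<le> z s" "int s \<in> Tset z w n" by auto
    have "int s - int (z s) \<in> Tset z w (int s)"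
      using Tset_child_z[of "int s" z w] Tset_self s by auto
    with Tset_mono[OF s(3)] s(2) show "int s - int (z s) \<in> Tset z w n \<inter> {..0}" by auto
  qed
qed

text \<open>Each good s contributes the leaf s - z s; since every offset z s - s is taken only
  finitely often, infinitely many good s give infinitely many distinct leaves.\<close>
lemma filterlim_Lambda_at_top:
  assumes "infinite G"
    and good: "\<And>s m. s \<in> G \<Longrightarrow> m \<ge> s + c \<Longrightarrow> 1 \<le> s \<and> s \<le> z s \<and> int s \<in> Tset z w (int m)"
    and offsets: "\<And>u. finite {s. z s = s + u}"
  shows "filterlim (\<lambda>n::nat. Lambda z w (int n)) at_top sequentially"
proof -
  let ?leaf = "\<lambda>s. int s - int (z s)"
  have "s \<in> {s. z s = s + nat (- ?leaf s)}" if "s \<in> G" for s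
    using good[OF that, of "s + c"] by (simp add: nat_diff_distrib)
  then have "G \<subseteq> (\<Union>v\<in>?leaf ` G. {s. z s = s + nat (- v)})" by blast
  then have "infinite (?leaf ` G)"
    using \<open>infinite G\<close> offsets by (meson finite_UN_I finite_subset)
  show ?thesis unfolding filterlim_at_top
  proof
    fix K
    obtain V where V: "finite V" "card V = K" "V \<subseteq> ?leaf ` G"
      using infinite_arbitrarily_large[OF \<open>infinite (?leaf ` G)\<close>] by blast
    then obtain F where F: "F \<subseteq> G" "finite F" "V = ?leaf ` F"
      by (auto dest: finite_subset_image)
    show "eventually (\<lambda>n. K \<le> Lambda z w (int n)) sequentially"
    proof (rule eventually_sequentiallyI)
      fix n assume n: "Max (insert 0 F) + c \<le> n"
      have "s + c \<le> n" if "s \<in> F" for s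
        using n F(2) that by (meson Max_ge add_le_mono1 finite_insert insertCI le_trans)
      then have "card (?leaf ` F) \<le> Lambda z w (int n)"
        using F(1) good by (intro card_leaves_le_Lambda[OF F(2)]) blast
      then show "K \<le> Lambda z w (int n)" using V(2) F(3) by simp
    qed
  qed
qed


lemma partial_sum_between:
  fixes f :: "nat \<Rightarrow> real"
  assumes nonneg: "\<And>i. 0 \<le> f i" and small: "\<And>i. f i \<le> \<theta>"
    and "\<not> summable f" and "\<theta> > 0"
  obtains L where "\<theta> \<le> (\<Sum>i<L. f i)" "(\<Sum>i<L. f i) \<le> 2 * \<theta>"
proof -
  have "\<exists>L. \<theta> \<le> (\<Sum>i<L. f i)"
  proof (rule ccontr)
    assume "\<nexists>L. \<theta> \<le> (\<Sum>i<L. f i)"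
    then have "summable f"
      using nonneg by (intro summableI_nonneg_bounded[of f \<theta>]) (auto simp: not_le less_imp_le)
    with \<open>\<not> summable f\<close> show False ..
  qed
  then obtain L1 where L1: "\<theta> \<le> (\<Sum>i<L1. f i)" by blast
  define L where "L = (LEAST L. \<theta> \<le> (\<Sum>i<L. f i))"
  have L: "\<theta> \<le> (\<Sum>i<L. f i)" unfolding L_def by (rule LeastI[of _ L1]) (rule L1)
  with \<open>\<theta> > 0\<close> have "L \<noteq> 0" by (intro notI) simp
  then obtain K where K: "L = Suc K" using not0_implies_Suc by blast
  have "\<not> \<theta> \<le> (\<Sum>i<K. f i)"
    using Least_le[of "\<lambda>L. \<theta> \<le> (\<Sum>i<L. f i)" K] K by (auto simp: L_def)
  with small[of K] have "(\<Sum>i<L. f i) \<le> 2 * \<theta>" by (simp add: K)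
  with L show thesis using that by blast
qed

lemma (in prob_space) bonferroni_lower_bound:
  fixes n :: nat
  assumes ev: "\<And>i. F i \<in> events"
  shows "(\<Sum>i<n. prob (F i)) - (\<Sum>i<n. \<Sum>j<i. prob (F i \<inter> F j)) \<le> prob (\<Union>i<n. F i)"
proof (induction n)
  case (Suc n)
  let ?U = "\<Union>i<n. F i"
  have U: "?U \<in> events" using ev by auto
  have "prob (\<Union>i<Suc n. F i) = prob ?U + prob (F n) - prob (F n \<inter> ?U)"
    using finite_measure_Union'[OF U ev, of n] finite_measure_Diff'[OF ev U, of n]
    by (simp add: lessThan_Suc Un_commute)
  moreover have "prob (F n \<inter> ?U) \<le> (\<Sum>j<n. prob (F n \<inter> F j))"
    unfolding Int_UN_distrib using ev by (intro finite_measure_subadditive_finite) auto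
  ultimately show ?case using Suc.IH by simp
qed simp

text \<open>A Kochen--Stone type bound: among the E s with p s <= a/8, take a block whose
  p-mass x lies in [a/8, a/4]; Bonferroni gives probability at least a x - x^2 >= a^2/16.\<close>
lemma (in prob_space) prob_UN_from_ge:
  fixes E :: "nat \<Rightarrow> 'a set" and p :: "nat \<Rightarrow> real"
  assumes ev: "\<And>s. E s \<in> events" and "a > 0"
    and nonneg: "\<And>s. 0 \<le> p s" and "p \<longlonglongrightarrow> 0" and "\<not> summable p"
    and lower: "\<And>s. a * p s \<le> prob (E s)"
    and pair: "\<And>s t. s \<noteq> t \<Longrightarrow> prob (E s \<inter> E t) \<le> p s * p t"
  shows "a\<^sup>2 / 16 \<le> prob (\<Union>m\<in>{n..}. E m)"
proof -
  have "eventually (\<lambda>s. p s < a / 8) sequentially"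
    using \<open>p \<longlonglongrightarrow> 0\<close> \<open>a > 0\<close> by (intro order_tendstoD(2)) auto
  then obtain n1 where n1: "\<And>s. s \<ge> n1 \<Longrightarrow> p s \<le> a / 8"
    unfolding eventually_sequentially by (meson less_imp_le)
  define n' where "n' = max n n1"
  have "\<not> summable (\<lambda>i. p (i + n'))"
    using \<open>\<not> summable p\<close> by (simp add: summable_iff_shift)
  then obtain L where L: "a / 8 \<le> (\<Sum>i<L. p (n' + i))" "(\<Sum>i<L. p (n' + i)) \<le> a / 4"
    using partial_sum_between[of "\<lambda>i. p (n' + i)" "a / 8"] nonneg n1 \<open>a > 0\<close>
    by (auto simp: n'_def add.commute)
  define x where "x = (\<Sum>i<L. p (n' + i))"
  let ?F = "\<lambda>i. E (n' + i)"
  have "a * x \<le> (\<Sum>i<L. prob (?F i))"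
    unfolding x_def sum_distrib_left by (intro sum_mono lower)
  moreover have "(\<Sum>j<i. prob (?F i \<inter> ?F j)) \<le> (\<Sum>j<L. p (n' + i) * p (n' + j))"
    if "i < L" for i
  proof -
    have "(\<Sum>j<i. prob (?F i \<inter> ?F j)) \<le> (\<Sum>j<i. p (n' + i) * p (n' + j))"
      by (intro sum_mono pair) simp
    also have "\<dots> \<le> (\<Sum>j<L. p (n' + i) * p (n' + j))"
      using that nonneg by (intro sum_mono2) auto
    finally show ?thesis .
  qed
  then have "(\<Sum>i<L. \<Sum>j<i. prob (?F i \<inter> ?F j)) \<le> (\<Sum>i<L. \<Sum>j<L. p (n' + i) * p (n' + j))"
    by (intro sum_mono) simp
  moreover have "(\<Sum>i<L. \<Sum>j<L. p (n' + i) * p (n' + j)) = x * x"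
    by (simp add: x_def sum_product)
  moreover have "prob (\<Union>i<L. ?F i) \<le> prob (\<Union>m\<in>{n..}. E m)"
    using ev by (intro finite_measure_mono UN_least UN_upper) (auto simp: n'_def)
  moreover have "a\<^sup>2 / 16 \<le> a * x - x * x"
  proof -
    have "(a / 8) * (3 * a / 4) \<le> x * (a - x)"
      using L \<open>a > 0\<close> by (intro mult_mono) (auto simp: x_def)
    moreover have "(a / 8) * (3 * a / 4) = 3 / 32 * a\<^sup>2" by (simp add: power2_eq_square)
    moreover have "x * (a - x) = a * x - x * x" by (simp add: algebra_simps)
    moreover have "0 \<le> a\<^sup>2" by simp
    ultimately show ?thesis by linarith
  qed
  moreover note bonferroni_lower_bound[of ?F L, OF ev]
  ultimately show ?thesis by linarith
qed

lemma (in prob_space) prob_limsup_ge: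
  fixes E :: "nat \<Rightarrow> 'a set" and p :: "nat \<Rightarrow> real"
  assumes ev: "\<And>s. E s \<in> events" and "a > 0"
    and "\<And>s. 0 \<le> p s" and "p \<longlonglongrightarrow> 0" and "\<not> summable p"
    and "\<And>s. a * p s \<le> prob (E s)"
    and "\<And>s t. s \<noteq> t \<Longrightarrow> prob (E s \<inter> E t) \<le> p s * p t"
  shows "a\<^sup>2 / 16 \<le> prob (limsup E)"
proof -
  have "(\<lambda>n. prob (\<Union>m\<in>{n..}. E m)) \<longlonglongrightarrow> prob (\<Inter>n. \<Union>m\<in>{n..}. E m)"
    using ev by (intro finite_Lim_measure_decseq) (auto simp: decseq_def, meson atLeast_iff order_trans)
  then show ?thesis
    unfolding limsup_INF_SUP
    by (rule LIMSEQ_le_const) (use prob_UN_from_ge[OF assms] in blast)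
qed

lemma (in prob_space) limsup_in_tail_events:
  assumes "\<And>i. A i \<subseteq> Pow (space M)"
    and E: "\<And>m. E m \<in> sigma_sets (space M) (\<Union> (A ` {m..}))"
  shows "limsup E \<in> tail_events A"
  unfolding tail_events_def
proof (rule InterI, clarify)
  fix n :: nat
  let ?S = "sigma_sets (space M) (\<Union> (A ` {n..}))"
  interpret S: sigma_algebra "space M" ?S
    using assms(1) by (intro sigma_algebra_sigma_sets) auto
  have "E m \<in> ?S" if "n \<le> m" for m
  proof -
    have "\<Union> (A ` {m..}) \<subseteq> \<Union> (A ` {n..})" using that by (intro Union_mono image_mono) auto
    then show ?thesis using E[of m] sigma_sets_mono' by blast
  qed
  then have "(\<Inter>k\<in>{n..}. \<Union>m\<in>{k..}. E m) \<in> ?S"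
    by (intro S.countable_INT' S.countable_UN'') auto
  moreover have "limsup E = (\<Inter>k\<in>{n..}. \<Union>m\<in>{k..}. E m)"
    unfolding limsup_INF_SUP
    by (auto simp: Inf_nat_def) (metis atLeast_iff max.cobounded1 max.cobounded2 order_trans)
  ultimately show "limsup E \<in> ?S" by simp
qed

locale iid_pairs = prob_space +
  fixes Z W :: "nat \<Rightarrow> 'a \<Rightarrow> nat"
  assumes indep: "indep_vars (\<lambda>_. count_space UNIV)
                  (\<lambda>i. case i of Inl n \<Rightarrow> Z n | Inr n \<Rightarrow> W n) UNIV"
    and distZ: "\<And>n. distr M (count_space UNIV) (Z n) = distr M (count_space UNIV) (Z 0)"
    and distW: "\<And>n. distr M (count_space UNIV) (W n) = distr M (count_space UNIV) (Z 0)"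
begin

definition X :: "nat + nat \<Rightarrow> 'a \<Rightarrow> nat" where
  "X = case_sum Z W"

lemma X_simps [simp]: "X (Inl n) = Z n" "X (Inr n) = W n"
  by (simp_all add: X_def)

lemma indep_X: "indep_sets (\<lambda>i. {X i -` B \<inter> space M | B. B \<in> sets (count_space UNIV)}) UNIV"
  using indep unfolding indep_vars_def2 X_def by simp

lemma measurable_X [measurable]: "X i \<in> measurable M (count_space UNIV)"
  using indep unfolding indep_vars_def2 X_def by simp

lemma measurable_Z [measurable]: "Z n \<in> measurable M (count_space UNIV)"
  using measurable_X[of "Inl n"] by simp

lemma measurable_W [measurable]: "W n \<in> measurable M (count_space UNIV)"
  using measurable_X[of "Inr n"] by simp

lemma prob_X: "prob {\<omega> \<in> space M. X i \<omega> \<in> B} = prob {\<omega> \<in> space M. Z 0 \<omega> \<in> B}"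
proof -
  have "distr M (count_space UNIV) (X i) = distr M (count_space UNIV) (Z 0)"
    using distZ distW by (cases i) simp_all
  then have "measure (distr M (count_space UNIV) (X i)) B = measure (distr M (count_space UNIV) (Z 0)) B"
    by simp
  then show ?thesis by (simp add: measure_distr vimage_def Int_def conj_commute)
qed

definition cylinder :: "(nat + nat) set \<Rightarrow> (nat + nat \<Rightarrow> nat set) \<Rightarrow> 'a set" where
  "cylinder J B = {\<omega> \<in> space M. \<forall>i\<in>J. X i \<omega> \<in> B i}"

lemma cylinder_Int:
  assumes "J \<inter> K = {}"
  shows "cylinder J B \<inter> cylinder K C = cylinder (J \<union> K) (\<lambda>i. if i \<in> J then B i else C i)"
  using assms by (auto simp: cylinder_def)

lemma cylinder_in_sigma_algebra:
  assumes "sigma_algebra (space M) F" "countable J"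
    and "\<And>i B. i \<in> J \<Longrightarrow> {\<omega> \<in> space M. X i \<omega> \<in> B} \<in> F"
  shows "cylinder J B \<in> F"
proof -
  interpret F: sigma_algebra "space M" F by fact
  show ?thesis
  proof (cases "J = {}")
    case True
    then show ?thesis by (simp add: cylinder_def)
  next
    case False
    then have "cylinder J B = (\<Inter>i\<in>J. {\<omega> \<in> space M. X i \<omega> \<in> B i})"
      by (auto simp: cylinder_def)
    also have "\<dots> \<in> F"
      using assms(2,3) False by (intro F.countable_INT') auto
    finally show ?thesis .
  qed
qed

lemma cylinder_in_events [measurable]: "countable J \<Longrightarrow> cylinder J B \<in> events"
  by (intro cylinder_in_sigma_algebra) (auto simp: sets.sigma_algebra_axioms)

lemma prob_cylinder:
  assumes "finite J"
  shows "prob (cylinder J B) = (\<Prod>i\<in>J. prob {\<omega> \<in> space M. Z 0 \<omega> \<in> B i})"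
proof (cases "J = {}")
  case True
  then show ?thesis by (simp add: cylinder_def prob_space)
next
  case False
  have "cylinder J B = (\<Inter>i\<in>J. X i -` B i \<inter> space M)"
    using False by (auto simp: cylinder_def)
  then have "prob (cylinder J B) = prob (\<Inter>i\<in>J. X i -` B i \<inter> space M)" by simp
  also have "\<dots> = (\<Prod>i\<in>J. prob (X i -` B i \<inter> space M))"
    by (rule indep_setsD[OF indep_X]) (use False assms in auto)
  also have "\<dots> = (\<Prod>i\<in>J. prob {\<omega> \<in> space M. Z 0 \<omega> \<in> B i})"
    using prob_X by (intro prod.cong) (simp_all add: vimage_def Int_def conj_commute)
  finally show ?thesis .
qed

lemma prob_cylinder_Int:
  assumes "finite J" "finite K" "J \<inter> K = {}"
  shows "prob (cylinder J B \<inter> cylinder K C) = prob (cylinder J B) * prob (cylinder K C)"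
proof -
  have "prob (cylinder J B \<inter> cylinder K C)
      = (\<Prod>i\<in>J \<union> K. prob {\<omega> \<in> space M. Z 0 \<omega> \<in> (if i \<in> J then B i else C i)})"
    using assms by (simp add: cylinder_Int prob_cylinder)
  also have "\<dots> = (\<Prod>i\<in>J. prob {\<omega> \<in> space M. Z 0 \<omega> \<in> B i}) * (\<Prod>i\<in>K. prob {\<omega> \<in> space M. Z 0 \<omega> \<in> C i})"
    using assms by (subst prod.union_disjoint) (auto intro!: arg_cong2[where f = "(*)"] prod.cong)
  finally show ?thesis using assms by (simp add: prob_cylinder)
qed

definition p :: "nat \<Rightarrow> real" where
  "p s = prob {\<omega> \<in> space M. s \<le> Z 0 \<omega>}"

definition q :: "nat \<Rightarrow> real" where
  "q k = (p (Suc k))\<^sup>2"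

lemma p_nonneg: "0 \<le> p s"
  by (simp add: p_def)

definition long_steps :: "nat \<Rightarrow> nat \<Rightarrow> 'a set" where
  "long_steps t k = cylinder {Inl t, Inr t} (\<lambda>_. {k<..})"

lemma prob_Z_ge: "prob (cylinder {Inl s} (\<lambda>_. {t..})) = p t"
  by (simp add: prob_cylinder p_def)

lemma prob_long_steps: "prob (long_steps t k) = q k"
  by (simp add: long_steps_def prob_cylinder q_def p_def power2_eq_square Suc_le_eq)

lemma p_tendsto_0: "p \<longlonglongrightarrow> 0"
proof -
  have "(\<lambda>s. prob {\<omega> \<in> space M. s \<le> Z 0 \<omega>}) \<longlonglongrightarrow> prob (\<Inter>s. {\<omega> \<in> space M. s \<le> Z 0 \<omega>})"
    by (intro finite_Lim_measure_decseq) (auto simp: decseq_def)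
  moreover have "(\<Inter>s. {\<omega> \<in> space M. s \<le> Z 0 \<omega>}) = {}"
    using Suc_n_not_le_n by blast
  ultimately show ?thesis by (simp add: p_def[abs_def])
qed

text \<open>By Borel--Cantelli, since P(Z_s = s + u) = P(Z_0 = s + u) is summable in s.\<close>
lemma AE_finite_offsets: "AE \<omega> in M. \<forall>u. finite {s. Z s \<omega> = s + u}"
proof (subst AE_all_countable, intro allI)
  fix u
  let ?B = "\<lambda>s. {\<omega> \<in> space M. Z s \<omega> = s + u}"
  have "(\<lambda>s. prob {\<omega> \<in> space M. Z 0 \<omega> = s + u}) sums prob (\<Union>s. {\<omega> \<in> space M. Z 0 \<omega> = s + u})"
    by (intro finite_measure_UNION) (auto simp: disjoint_family_on_def)
  moreover have "prob (?B s) = prob {\<omega> \<in> space M. Z 0 \<omega> = s + u}" for s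
    using prob_X[of "Inl s" "{s + u}"] by simp
  ultimately have "summable (\<lambda>s. prob (?B s))" by (simp add: sums_summable)
  then have "AE \<omega> in M. eventually (\<lambda>s. \<omega> \<in> space M - ?B s) sequentially"
    by (intro borel_cantelli_AE1) (auto simp: less_top[symmetric])
  then show "AE \<omega> in M. finite {s. Z s \<omega> = s + u}"
  proof (rule AE_mp, intro AE_I2 impI)
    fix \<omega> assume "\<omega> \<in> space M" "eventually (\<lambda>s. \<omega> \<in> space M - ?B s) sequentially"
    then obtain N where "\<And>s. s \<ge> N \<Longrightarrow> Z s \<omega> \<noteq> s + u" by (auto simp: eventually_sequentially)
    then have "{s. Z s \<omega> = s + u} \<subseteq> {..<N}" by (auto simp: not_less[symmetric])
    then show "finite {s. Z s \<omega> = s + u}" by (rule finite_subset) simp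
  qed
qed

definition coordinate_sigma :: "nat \<Rightarrow> 'a set set" where
  "coordinate_sigma n = sigma_sets (space M)
     (\<Union>i\<in>{Inl n, Inr n}. {X i -` B \<inter> space M | B. B \<in> sets (count_space UNIV)})"

lemma indep_coordinate_sigma: "indep_sets coordinate_sigma UNIV"
  unfolding coordinate_sigma_def
proof (rule indep_sets_collect_sigma)
  have "i \<in> (\<Union>n. {Inl n, Inr n})" for i :: "nat + nat"
    by (cases i) auto
  then have "(\<Union>n. {Inl n, Inr n}) = (UNIV :: (nat + nat) set)" by blast
  then show "indep_sets (\<lambda>i. {X i -` B \<inter> space M | B. B \<in> sets (count_space UNIV)}) (\<Union>n. {Inl n, Inr n})"
    using indep_X by simp
  show "Int_stable {X i -` B \<inter> space M | B. B \<in> sets (count_space UNIV)}" for i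
  proof (rule Int_stableI)
    fix a b assume "a \<in> {X i -` B \<inter> space M | B. B \<in> sets (count_space UNIV)}"
      "b \<in> {X i -` B \<inter> space M | B. B \<in> sets (count_space UNIV)}"
    then obtain A B where "a = X i -` A \<inter> space M" "b = X i -` B \<inter> space M" by auto
    then have "a \<inter> b = X i -` (A \<inter> B) \<inter> space M" by auto
    then show "a \<inter> b \<in> {X i -` B \<inter> space M | B. B \<in> sets (count_space UNIV)}"
      by (intro CollectI exI[of _ "A \<inter> B"]) simp
  qed
  show "disjoint_family_on (\<lambda>n. {Inl n, Inr n}) UNIV"
    by (auto simp: disjoint_family_on_def)
qed

definition future :: "nat \<Rightarrow> 'a set set" where
  "future m = sigma_sets (space M) (\<Union> (coordinate_sigma ` {m..}))"

lemma coordinate_sigma_subset: "coordinate_sigma n \<subseteq> Pow (space M)"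
proof
  fix x assume "x \<in> coordinate_sigma n"
  then have "x \<subseteq> space M"
    unfolding coordinate_sigma_def by (rule sigma_sets_into_sp[rotated]) auto
  then show "x \<in> Pow (space M)" by simp
qed

lemma sigma_algebra_coordinate_sigma: "sigma_algebra (space M) (coordinate_sigma n)"
  unfolding coordinate_sigma_def by (intro sigma_algebra_sigma_sets) auto

lemma sigma_algebra_future: "sigma_algebra (space M) (future m)"
  unfolding future_def using coordinate_sigma_subset by (intro sigma_algebra_sigma_sets) blast

lemma X_in_future:
  assumes "i \<in> Inl ` {m..} \<union> Inr ` {m..}"
  shows "{\<omega> \<in> space M. X i \<omega> \<in> B} \<in> future m"
proof -
  obtain n where n: "m \<le> n" "i \<in> {Inl n, Inr n}" using assms by auto
  have "{\<omega> \<in> space M. X i \<omega> \<in> B} = X i -` B \<inter> space M" by auto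
  also have "\<dots> \<in> coordinate_sigma n"
    unfolding coordinate_sigma_def using n(2) by (intro sigma_sets.Basic) auto
  finally show ?thesis
    unfolding future_def using n(1) by (intro sigma_sets.Basic) auto
qed

lemma cylinder_in_future:
  "countable J \<Longrightarrow> J \<subseteq> Inl ` {m..} \<union> Inr ` {m..} \<Longrightarrow> cylinder J B \<in> future m"
  by (intro cylinder_in_sigma_algebra sigma_algebra_future X_in_future) auto

lemma limsup_in_tail_events_coordinates:
  "(\<And>m. E m \<in> future m) \<Longrightarrow> limsup E \<in> tail_events coordinate_sigma"
  by (intro limsup_in_tail_events coordinate_sigma_subset) (simp add: future_def)

end

locale random_tree = iid_pairs +
  assumes pos: "\<And>n \<omega>. \<omega> \<in> space M \<Longrightarrow> Z n \<omega> \<ge> 1 \<and> W n \<omega> \<ge> 1"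
    and aperiodic: "Gcd {k. measure M {\<omega> \<in> space M. Z 0 \<omega> = k} > 0} = 1"
    and infmean: "(\<integral>\<^sup>+ \<omega>. ennreal (real (Z 0 \<omega>)) \<partial>M) = \<infinity>"
    and finmin: "(\<integral>\<^sup>+ \<omega>. ennreal (real (min (Z 0 \<omega>) (W 0 \<omega>))) \<partial>M) < \<infinity>"
begin

definition support :: "nat set" where
  "support = {k. 0 < prob {\<omega> \<in> space M. Z 0 \<omega> = k}}"

lemma zero_notin_support: "0 \<notin> support"
proof -
  have "Z 0 \<omega> \<noteq> 0" if "\<omega> \<in> space M" for \<omega>
    using pos[OF that, of 0] by simp
  then have "{\<omega> \<in> space M. Z 0 \<omega> = 0} = {}" by blast
  then have "prob {\<omega> \<in> space M. Z 0 \<omega> = 0} = 0" by (metis measure_empty)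
  then show ?thesis by (simp add: support_def)
qed

lemma not_summable_p: "\<not> summable p"
proof
  assume "summable p"
  then have "summable (\<lambda>t. p (Suc t))" by (subst summable_Suc_iff)
  have "(\<integral>\<^sup>+ \<omega>. ennreal (real (Z 0 \<omega>)) \<partial>M) = (\<Sum>t. emeasure M {\<omega> \<in> space M. t < Z 0 \<omega>})"
    using nn_integral_nat_function[of "Z 0" M] by (simp add: ennreal_of_nat_eq_real_of_nat)
  also have "\<dots> = (\<Sum>t. ennreal (p (Suc t)))"
    by (simp add: p_def emeasure_eq_measure Suc_le_eq)
  also have "\<dots> = ennreal (\<Sum>t. p (Suc t))"
    using \<open>summable (\<lambda>t. p (Suc t))\<close> p_nonneg by (intro suminf_ennreal2) auto
  finally show False using infmean by simp
qed

lemma summable_q: "summable q"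
proof (rule summable_suminf_not_top)
  have "(\<integral>\<^sup>+ \<omega>. ennreal (real (min (Z 0 \<omega>) (W 0 \<omega>))) \<partial>M)
      = (\<Sum>k. emeasure M {\<omega> \<in> space M. k < min (Z 0 \<omega>) (W 0 \<omega>)})"
    using nn_integral_nat_function[of "\<lambda>\<omega>. min (Z 0 \<omega>) (W 0 \<omega>)" M]
    by (simp add: ennreal_of_nat_eq_real_of_nat)
  also have "\<dots> = (\<Sum>k. ennreal (prob (long_steps 0 k)))"
    by (simp add: long_steps_def cylinder_def emeasure_eq_measure)
  also have "\<dots> = (\<Sum>k. ennreal (q k))"
    by (simp only: prob_long_steps)
  finally show "(\<Sum>k. ennreal (q k)) \<noteq> \<top>" using finmin by simp
qed (simp add: q_def)

lemma exists_window_parameters: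
  obtains N r where "0 < r" "\<And>n. N \<le> n \<Longrightarrow> n \<in> monoid_closure support"
    "(\<Sum>k. q (k + r)) \<le> 1 / 2"
proof -
  obtain N where N: "\<And>n. N \<le> n \<Longrightarrow> n \<in> monoid_closure support"
    using monoid_closure_cofinite aperiodic zero_notin_support by (auto simp: support_def)
  have "eventually (\<lambda>n. (\<Sum>k. q (k + n)) < 1 / 2) sequentially"
    using suminf_exist_split2[OF summable_q] by (rule order_tendstoD) simp
  then obtain n0 where n0: "\<And>n. n0 \<le> n \<Longrightarrow> (\<Sum>k. q (k + n)) < 1 / 2"
    unfolding eventually_sequentially by blast
  have "(\<Sum>k. q (k + Suc n0)) < 1 / 2" by (rule n0) simp
  then have "(\<Sum>k. q (k + Suc n0)) \<le> 1 / 2" by simp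
  with N show thesis by (intro that) auto
qed

end

text \<open>The good event at s pins each Z_(s+j) on the window 0 < j < N + r to a value that
  keeps s reachable from s + j, demands the leaf s - Z_s <= 0, and forbids every later t from
  jumping over the window with both of its steps.\<close>
locale window_events = random_tree +
  fixes N r :: nat
  assumes r_pos: "0 < r"
    and closure_from_N: "\<And>n. N \<le> n \<Longrightarrow> n \<in> monoid_closure support"
    and tail_q: "(\<Sum>k. q (k + r)) \<le> 1 / 2"
begin

definition window :: "nat set" where
  "window = {j \<in> monoid_closure support. 0 < j \<and> j < N + r}"

definition admissible :: "nat \<Rightarrow> nat set" where
  "admissible j = {d \<in> support. d \<le> j \<and> j - d \<in> monoid_closure support}"

definition kappa :: real where
  "kappa = (\<Prod>j\<in>window. prob {\<omega> \<in> space M. Z 0 \<omega> \<in> admissible j})"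

definition anchor :: "nat \<Rightarrow> 'a set" where
  "anchor s = cylinder {Inl s} (\<lambda>_. {s..}) \<inter>
     cylinder ((\<lambda>j. Inl (s + j)) ` window) (case_sum (\<lambda>t. admissible (t - s)) (\<lambda>_. UNIV))"

definition good :: "nat \<Rightarrow> 'a set" where
  "good s = anchor s - (\<Union>t\<in>{s + N + r..}. long_steps t (t - (s + N)))"

lemma finite_window: "finite window"
  by (simp add: window_def)

lemma kappa_pos: "0 < kappa"
  unfolding kappa_def
proof (rule prod_pos)
  fix j assume "j \<in> window"
  then obtain d where d: "d \<in> admissible j"
    using monoid_closure_last_summand[of j support] by (auto simp: window_def admissible_def)
  then have "0 < prob {\<omega> \<in> space M. Z 0 \<omega> = d}" by (simp add: admissible_def support_def)
  also have "\<dots> \<le> prob {\<omega> \<in> space M. Z 0 \<omega> \<in> admissible j}"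
    using d by (intro finite_measure_mono) auto
  finally show "0 < prob {\<omega> \<in> space M. Z 0 \<omega> \<in> admissible j}" .
qed

lemma anchor_indices: "Inl s \<notin> (\<lambda>j. Inl (s + j)) ` window"
  by (auto simp: window_def)

lemma prob_anchor: "prob (anchor s) = p s * kappa"
proof -
  have "prob (anchor s) = prob (cylinder {Inl s} (\<lambda>_. {s..})) *
      prob (cylinder ((\<lambda>j. Inl (s + j)) ` window) (case_sum (\<lambda>t. admissible (t - s)) (\<lambda>_. UNIV)))"
    unfolding anchor_def by (rule prob_cylinder_Int) (use anchor_indices finite_window in auto)
  also have "prob (cylinder ((\<lambda>j. Inl (s + j)) ` window) (case_sum (\<lambda>t. admissible (t - s)) (\<lambda>_. UNIV)))
      = kappa"
    using finite_window by (simp add: kappa_def prob_cylinder prod.reindex inj_on_def)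
  finally show ?thesis by (simp add: prob_Z_ge)
qed

lemma prob_anchor_long_steps:
  assumes "s + N + r \<le> t"
  shows "prob (anchor s \<inter> long_steps t k) = prob (anchor s) * q k"
proof -
  let ?J = "{Inl s} \<union> (\<lambda>j. Inl (s + j)) ` window"
  have "anchor s = cylinder ?J (\<lambda>i. if i \<in> {Inl s} then {s..} else case_sum (\<lambda>t. admissible (t - s)) (\<lambda>_. UNIV) i)"
    unfolding anchor_def by (rule cylinder_Int) (use anchor_indices in blast)
  moreover have "?J \<inter> {Inl t, Inr t} = {}"
    using assms r_pos by (auto simp: window_def)
  ultimately show ?thesis
    using finite_window prob_long_steps[of t k]
    by (simp add: long_steps_def prob_cylinder_Int)
qed

lemma good_in_future: "good s \<in> future s"
proof -
  interpret F: sigma_algebra "space M" "future s" by (rule sigma_algebra_future)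
  have "anchor s \<in> future s"
    unfolding anchor_def using finite_window
    by (intro F.Int cylinder_in_future) (auto intro: countable_finite)
  moreover have "long_steps t k \<in> future s" if "s \<le> t" for t k
    unfolding long_steps_def using that by (intro cylinder_in_future) auto
  ultimately show ?thesis
    unfolding good_def by (intro F.Diff F.countable_UN'') auto
qed

lemma good_in_events [measurable]: "good s \<in> events"
  unfolding good_def anchor_def long_steps_def using finite_window
  by (intro sets.Diff sets.Int sets.countable_UN'' cylinder_in_events) (auto intro: countable_finite)

text \<open>With probability at least 1/2 given the anchor, no later site takes two long steps.\<close>
lemma prob_good_ge: "kappa / 2 * p s \<le> prob (good s)"
proof -
  let ?E = "\<lambda>i. anchor s \<inter> long_steps (s + N + r + i) (r + i)"
  have ev: "?E i \<in> events" for i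
    unfolding anchor_def long_steps_def using finite_window
    by (intro sets.Int cylinder_in_events) (auto intro: countable_finite)
  have E: "prob (?E i) = prob (anchor s) * q (i + r)" for i
    by (simp add: prob_anchor_long_steps add.commute)
  have summ: "summable (\<lambda>i. prob (?E i))"
    unfolding E using summable_q by (intro summable_mult) (simp add: summable_iff_shift)
  have "{s + N + r..} = (\<lambda>i. s + N + r + i) ` {0..}"
    by (simp only: image_add_atLeast) simp
  then have "anchor s \<inter> (\<Union>t\<in>{s + N + r..}. long_steps t (t - (s + N))) = (\<Union>i. ?E i)"
    by simp
  moreover have "prob (\<Union>i. ?E i) \<le> (\<Sum>i. prob (?E i))"
    using ev summ by (intro finite_measure_subadditive_countably) auto
  moreover have "(\<Sum>i. prob (?E i)) = prob (anchor s) * (\<Sum>i. q (i + r))"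
    unfolding E using summable_q by (intro suminf_mult) (simp add: summable_iff_shift)
  moreover have "prob (anchor s) * (\<Sum>i. q (i + r)) \<le> prob (anchor s) * (1 / 2)"
    using tail_q by (intro mult_left_mono) (auto simp: add.commute)
  moreover have "prob (good s) = prob (anchor s) - prob (anchor s \<inter> (\<Union>t\<in>{s + N + r..}. long_steps t (t - (s + N))))"
    unfolding good_def long_steps_def anchor_def using finite_window
    by (intro finite_measure_Diff' sets.Int cylinder_in_events sets.countable_UN'') (auto intro: countable_finite)
  ultimately show ?thesis using prob_anchor[of s] by (simp add: mult.commute)
qed

lemma prob_good_Int: "s \<noteq> t \<Longrightarrow> prob (good s \<inter> good t) \<le> p s * p t"
proof -
  assume "s \<noteq> t"
  have "prob (good s \<inter> good t) \<le> prob (cylinder {Inl s} (\<lambda>_. {s..}) \<inter> cylinder {Inl t} (\<lambda>_. {t..}))"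
    by (intro finite_measure_mono) (auto simp: good_def anchor_def)
  also have "\<dots> = p s * p t"
    using \<open>s \<noteq> t\<close> by (simp add: prob_cylinder_Int prob_Z_ge)
  finally show ?thesis .
qed

lemma AE_frequently_good: "AE \<omega> in M. \<exists>\<^sub>F s in sequentially. \<omega> \<in> good s"
proof -
  have "(kappa / 2)\<^sup>2 / 16 \<le> prob (limsup good)"
    using kappa_pos p_nonneg p_tendsto_0 not_summable_p prob_good_ge prob_good_Int
    by (intro prob_limsup_ge) auto
  moreover have "prob (limsup good) = 0 \<or> prob (limsup good) = 1"
    using sigma_algebra_coordinate_sigma indep_coordinate_sigma
      limsup_in_tail_events_coordinates[OF good_in_future]
    by (rule kolmogorov_0_1_law)
  ultimately have "prob (limsup good) = 1" using kappa_pos by auto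
  then show ?thesis by (auto dest: AE_prob_1 simp: mem_limsup_iff)
qed

lemma good_reaches:
  assumes "\<omega> \<in> good s" "s + N \<le> m"
  shows "s \<le> Z s \<omega> \<and> int s \<in> Tset (\<lambda>k. Z k \<omega>) (\<lambda>k. W k \<omega>) (int m)"
proof -
  have \<omega>: "\<omega> \<in> space M" "s \<le> Z s \<omega>"
    and steps: "\<And>j. j \<in> window \<Longrightarrow> Z (s + j) \<omega> \<in> admissible j"
    and long: "\<And>t. s + N + r \<le> t \<Longrightarrow> \<omega> \<notin> long_steps t (t - (s + N))"
    using assms(1) by (auto simp: good_def anchor_def cylinder_def)
  have short: "min (Z t \<omega>) (W t \<omega>) \<le> t - (s + N)" if "s + N + r \<le> t" for t
    using long[OF that] \<omega>(1) by (auto simp: long_steps_def cylinder_def)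
  have "int s \<in> Tset (\<lambda>k. Z k \<omega>) (\<lambda>k. W k \<omega>) (int m)"
  proof (rule Tset_descent[where a = "s + N" and b = "s + N + r"])
    show "1 \<le> Z t \<omega>" "1 \<le> W t \<omega>" for t using pos[OF \<omega>(1)] by auto
    show "int s \<in> Tset (\<lambda>k. Z k \<omega>) (\<lambda>k. W k \<omega>) (int m')" if "s + N \<le> m'" "m' < s + N + r" for m'
    proof -
      have "int s \<in> Tset (\<lambda>k. Z k \<omega>) (\<lambda>k. W k \<omega>) (int (s + (m' - s)))"
      proof (rule Tset_window[where C = "monoid_closure support" and L = "N + r"])
        fix j assume "j \<in> monoid_closure support" "0 < j" "j < N + r"
        then have "Z (s + j) \<omega> \<in> admissible j" by (intro steps) (simp add: window_def)
        then show "1 \<le> Z (s + j) \<omega> \<and> Z (s + j) \<omega> \<le> j \<and> j - Z (s + j) \<omega> \<in> monoid_closure support"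
          using zero_notin_support by (auto simp: admissible_def Suc_le_eq intro: gr0I)
      qed (use that closure_from_N in auto)
      then show ?thesis using that by simp
    qed
  qed (use short assms(2) in auto)
  with \<omega> show ?thesis by simp
qed

end

context random_tree
begin

lemma AE_Lambda_tendsto:
  "AE \<omega> in M. filterlim (\<lambda>n::nat. Lambda (\<lambda>k. Z k \<omega>) (\<lambda>k. W k \<omega>) (int n)) at_top sequentially"
proof -
  obtain N r where "window_events M Z W N r"
    using exists_window_parameters by (metis window_events.intro window_events_axioms.intro random_tree_axioms)
  then interpret window_events M Z W N r .
  show ?thesis
    using AE_frequently_good AE_finite_offsets AE_space
  proof eventually_elim
    case (elim \<omega>)
    let ?G = "{s. \<omega> \<in> good s \<and> 1 \<le> s}"
    have "\<exists>\<^sub>F s in sequentially. 1 \<le> s \<and> \<omega> \<in> good s"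
      using elim(1) by (rule frequently_eventually_conj) (simp add: eventually_ge_at_top)
    then have "infinite ?G"
      by (simp add: frequently_cofinite[symmetric] cofinite_eq_sequentially conj_commute)
    then show ?case
      using good_reaches elim(2) by (intro filterlim_Lambda_at_top[where c = N]) auto
  qed
qed

end

theorem theorem5:
  fixes M :: "'a measure" and Z W :: "nat \<Rightarrow> 'a \<Rightarrow> nat"
  assumes "prob_space M"
    and indep: "prob_space.indep_vars M (\<lambda>_. count_space UNIV)
                  (\<lambda>i. case i of Inl n \<Rightarrow> Z n | Inr n \<Rightarrow> W n) UNIV"
    and distZ: "\<And>n. distr M (count_space UNIV) (Z n) = distr M (count_space UNIV) (Z 0)"
    and distW: "\<And>n. distr M (count_space UNIV) (W n) = distr M (count_space UNIV) (Z 0)"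
    and pos: "\<And>n \<omega>. \<omega> \<in> space M \<Longrightarrow> Z n \<omega> \<ge> 1 \<and> W n \<omega> \<ge> 1"
    and aperiodic: "Gcd {k. measure M {\<omega> \<in> space M. Z 0 \<omega> = k} > 0} = 1"
    and infmean: "(\<integral>\<^sup>+ \<omega>. ennreal (real (Z 0 \<omega>)) \<partial>M) = \<infinity>"
    and finmin: "(\<integral>\<^sup>+ \<omega>. ennreal (real (min (Z 0 \<omega>) (W 0 \<omega>))) \<partial>M) < \<infinity>"
  shows "AE \<omega> in M. filterlim (\<lambda>n::nat. Lambda (\<lambda>k. Z k \<omega>) (\<lambda>k. W k \<omega>) (int n))
                       at_top sequentially"
proof -
  have "random_tree M Z W"
    using assms by (simp add: random_tree_def random_tree_axioms_def iid_pairs_def iid_pairs_axioms_def)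
  then show ?thesis by (rule random_tree.AE_Lambda_tendsto)
qed

end
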